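(* For every integer $i\ge1$ there exist $R_i^0,\dots,R_i^{i-1}\in\mathrm{End}(\mathbb{R}^n)[X_0,\dots,X_{i-1}]$ such that \[ Q_i^{i+k}=\sum_{j=0}^{i-1}k^jR_i^j\qquad\text{for all integers }k\ge0 \] (with the convention $0^0=1$). Furthermore, $R_i^{i-1}=\dfrac{BP_{i-1}}{(i-1)!}$.
   Context: Let $n\ge1$ and $A,B\in\mathrm{End}(\mathbb{R}^n)$. $\mathrm{End}(\mathbb{R}^n)[X_0,\dots,X_{k-1}]$ denotes polynomials in commuting scalar indeterminates $X_0,\dots,X_{k-1}$ with coefficients in $\mathrm{End}(\mathbb{R}^n)$ (for $k=0$, just $\mathrm{End}(\mathbb{R}^n)$), and $\mathrm{End}(\mathbb{R}^n)[(X_k)_{k\in\mathbb{N}}]$ is the union of these. Define the linear map $\Psi$ on $\mathrm{End}(\mathbb{R}^n)[(X_k)_{k\in\mathbb{N}}]$ by $\Psi(P)(X_0,\dots,X_k)=P(X_0,\dots,X_{k-1})(A+X_0B)+\sum_{i=0}^{k-1}\frac{\partial P}{\partial X_i}(X_0,\dots,X_{k-1})X_{i+1}$, where $k=\min\{\ell\in\mathbb{N}:P\in\mathrm{End}(\mathbb{R}^n)[X_0,\dots,X_{\ell-1}]\}$. Define $P_0=I$ (identity) and $P_{k+1}=\Psi(P_k)$ for $k\in\mathbb{N}$, so $P_k\in\mathrm{End}(\mathbb{R}^n)[X_0,\dots,X_{k-1}]$. For integers $1\le i\le k$ let $Q_i^k=\partial P_k/\partial X_{k-i}$. *)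

theory Defs
  imports "HOL-Analysis.Analysis" "HOL-Library.Poly_Mapping"
begin

text \<open>Polynomials in commuting scalar indeterminates X_0, X_1, ... with coefficients
in End(R^n) = real^'n^'n (matrix product is the operator **).\<close>

type_synonym monom = "nat \<Rightarrow>\<^sub>0 nat"
type_synonym 'n epoly = "monom \<Rightarrow>\<^sub>0 ((real, 'n) vec, 'n) vec"

definition in_vars :: "nat \<Rightarrow> 'n::finite epoly \<Rightarrow> bool" where
  "in_vars l P \<longleftrightarrow> (\<forall>m\<in>Poly_Mapping.keys P. \<forall>j\<in>Poly_Mapping.keys m. j < l)"

definition nvars :: "'n::finite epoly \<Rightarrow> nat" where
  "nvars P = (LEAST l. in_vars l P)"

definition rmul :: "'n::finite epoly \<Rightarrow> real^'n^'n \<Rightarrow> 'n epoly" where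
  "rmul P M = (\<Sum>m\<in>Poly_Mapping.keys P. Poly_Mapping.single m (Poly_Mapping.lookup P m ** M))"

definition lmul :: "real^'n^'n \<Rightarrow> 'n::finite epoly \<Rightarrow> 'n epoly" where
  "lmul M P = (\<Sum>m\<in>Poly_Mapping.keys P. Poly_Mapping.single m (M ** Poly_Mapping.lookup P m))"

definition smul :: "real \<Rightarrow> 'n::finite epoly \<Rightarrow> 'n epoly" where
  "smul c P = (\<Sum>m\<in>Poly_Mapping.keys P. Poly_Mapping.single m (c *\<^sub>R Poly_Mapping.lookup P m))"

definition xmul :: "nat \<Rightarrow> 'n::finite epoly \<Rightarrow> 'n epoly" where
  "xmul j P = (\<Sum>m\<in>Poly_Mapping.keys P. Poly_Mapping.single (m + Poly_Mapping.single j 1) (Poly_Mapping.lookup P m))"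

definition pdiff :: "nat \<Rightarrow> 'n::finite epoly \<Rightarrow> 'n epoly" where
  "pdiff i P = (\<Sum>m\<in>Poly_Mapping.keys P.
      Poly_Mapping.single (m - Poly_Mapping.single i 1) (real (Poly_Mapping.lookup m i) *\<^sub>R Poly_Mapping.lookup P m))"

definition one_poly :: "'n::finite epoly" where
  "one_poly = Poly_Mapping.single 0 (mat 1)"

definition Psi :: "real^'n^'n \<Rightarrow> real^'n^'n \<Rightarrow> 'n::finite epoly \<Rightarrow> 'n epoly" where
  "Psi A B P = rmul P A + xmul 0 (rmul P B) + (\<Sum>i<nvars P. xmul (Suc i) (pdiff i P))"

definition Pk :: "real^'n^'n \<Rightarrow> real^'n^'n \<Rightarrow> nat \<Rightarrow> 'n::finite epoly" where
  "Pk A B k = (Psi A B ^^ k) one_poly"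

text \<open>Q_i^k = dP_k / dX_{k-i}  (meaningful for 1 \<le> i \<le> k)\<close>
definition Qik :: "real^'n^'n \<Rightarrow> real^'n^'n \<Rightarrow> nat \<Rightarrow> nat \<Rightarrow> 'n::finite epoly" where
  "Qik A B i k = pdiff (k - i) (Pk A B k)"

end

theory Submission
  imports Defs "HOL-Computational_Algebra.Polynomial"
begin

text \<open>Differentiating Psi(P) = P (A + X_0 B) + sum_i dP/dX_i X_{i+1} with respect to X_{k+1}
  gives d/dX_{k+1} Psi(P) = Psi(dP/dX_{k+1}) + dP/dX_k. Hence
  Q_{i+1}^{i+k+2} = Q_{i+1}^{i+k+1} + Psi(Q_i^{i+k+1}), that is,
  Q_{i+1}^{i+1+k} = Q_{i+1}^{i+1} + sum_{t<k} Psi(Q_i^{i+t+1}).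
  Once the number of variables is fixed, Psi is linear, so inserting Q_i^{i+k} = sum_j k^j R_i^j
  leaves the power sums sum_{t<k} (t+1)^j, which are polynomials in k of degree j+1 with leading
  coefficient 1/(j+1). By induction on i this gives the polynomial form, with top coefficient
  R_{i+1}^i = Psi(R_i^{i-1}) / i; since left multiplication by B commutes with Psi, this is
  B Psi(P_{i-1}) / i! = B P_i / i!. The induction starts from Q_1^{1+k} = Q_1^1 = B.\<close>

section \<open>Sums of powers\<close>

lemma degree_diff_eq_left:
  fixes p q :: "'a::ab_group_add poly"
  shows "degree q < degree p \<Longrightarrow> degree (p - q) = degree p"
  using degree_add_eq_left[of "- q" p] by simp

lemma power_Suc_telescope:
  "real k ^ Suc j = (\<Sum>l\<le>j. real (Suc j choose l) * (\<Sum>t<k. real t ^ l))"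
proof -
  have difference: "real (Suc t) ^ Suc j - real t ^ Suc j = (\<Sum>l\<le>j. real (Suc j choose l) * real t ^ l)" for t
    using binomial_ring[of "real t" 1 "Suc j"] by (simp add: ac_simps)
  have "real k ^ Suc j = (\<Sum>t<k. real (Suc t) ^ Suc j - real t ^ Suc j)"
    by (subst sum_lessThan_telescope) simp
  also have "\<dots> = (\<Sum>l\<le>j. real (Suc j choose l) * (\<Sum>t<k. real t ^ l))"
    by (simp only: difference sum_distrib_left) (rule sum.swap)
  finally show ?thesis .
qed

lemma sum_powers_poly:
  "\<exists>p. degree p = Suc j \<and> lead_coeff p = 1 / real (Suc j) \<and>
       (\<forall>k. poly p (real k) = (\<Sum>t<k. real t ^ j))"
proof (induction j rule: less_induct)
  case (less j)
  then obtain p where p: "\<And>l. l < j \<Longrightarrow> degree (p l) = Suc l \<and>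
      (\<forall>k. poly (p l) (real k) = (\<Sum>t<k. real t ^ l))"
    by metis
  define r where "r = (\<Sum>l<j. smult (real (Suc j choose l)) (p l))"
  define q where "q = smult (1 / real (Suc j)) (monom 1 (Suc j) - r)"
  have "degree r \<le> j"
    unfolding r_def using p by (intro degree_sum_le) (auto intro: order.trans[OF degree_smult_le])
  then have deg: "degree (monom 1 (Suc j) - r) = Suc j" and lc: "coeff r (Suc j) = 0"
    by (auto simp: degree_monom_eq degree_diff_eq_left coeff_eq_0)
  have "poly q (real k) = (\<Sum>t<k. real t ^ j)" for k
    using power_Suc_telescope[of k j] p
    by (simp add: q_def r_def poly_sum poly_monom atMost_Suc lessThan_Suc_atMost[symmetric] field_simps)
  then show ?case
    using deg lc by (intro exI[of _ q]) (simp add: q_def)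
qed

lemma sum_Suc_powers_poly:
  "\<exists>p. degree p = Suc j \<and> lead_coeff p = 1 / real (Suc j) \<and>
       (\<forall>k. poly p (real k) = (\<Sum>t<k. real (Suc t) ^ j))"
proof -
  obtain p where p: "degree p = Suc j" "lead_coeff p = 1 / real (Suc j)"
      "\<And>k. poly p (real k) = (\<Sum>t<k. real t ^ j)"
    using sum_powers_poly by blast
  define q where "q = pcompose p [:1, 1:] - [:0 ^ j:]"
    \<comment> \<open>\<open>p (k + 1)\<close> also counts the summand \<open>t = 0\<close>, which is \<open>0 ^ 0 = 1\<close> for \<open>j = 0\<close>\<close>
  have val: "poly q (real k) = (\<Sum>t<k. real (Suc t) ^ j)" for k
    using p(3)[of "Suc k"] sum.lessThan_Suc_shift[of "\<lambda>t. real t ^ j" k]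
    by (simp add: q_def poly_pcompose add.commute del: sum.lessThan_Suc)
  have "lead_coeff (pcompose p [:1, 1:]) = lead_coeff p"
    using lead_coeff_comp[of "[:1, 1:]" p] by simp
  moreover have "degree (pcompose p [:1, 1:]) = Suc j"
    using p(1) by (simp add: degree_pcompose)
  ultimately have "degree q = Suc j" "lead_coeff q = 1 / real (Suc j)"
    using p(2) by (simp_all add: q_def degree_diff_eq_left)
  with val show ?thesis by blast
qed

section \<open>Coefficients of the polynomial operations\<close>

lemma single_add_eq_iff:
  "m + Poly_Mapping.single j 1 = x \<longleftrightarrow>
     Poly_Mapping.lookup x j \<noteq> 0 \<and> m = x - Poly_Mapping.single j (1::nat)"
  by (auto simp: poly_mapping_eq_iff fun_eq_iff lookup_add lookup_minus lookup_single when_def)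

lemma single_diff_eq_iff:
  assumes "Poly_Mapping.lookup m j \<noteq> 0"
  shows "m - Poly_Mapping.single j 1 = x \<longleftrightarrow> m = x + Poly_Mapping.single j (1::nat)"
  using assms by (auto simp: poly_mapping_eq_iff fun_eq_iff lookup_add lookup_minus lookup_single when_def)

lemma diff_single_add_single:
  assumes "Poly_Mapping.lookup x l \<noteq> 0"
  shows "x - Poly_Mapping.single l 1 + Poly_Mapping.single j 1 =
         x + Poly_Mapping.single j 1 - Poly_Mapping.single l (1::nat)"
  using assms by (intro poly_mapping_eqI) (auto simp: lookup_add lookup_minus lookup_single when_def)

lemma lookup_sum_single:
  "Poly_Mapping.lookup (\<Sum>m\<in>S. Poly_Mapping.single (f m) (g m)) x = (\<Sum>m\<in>S. if f m = x then g m else 0)"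
  by (simp add: lookup_sum lookup_single when_def)

lemma lookup_sum_keys_single:
  assumes "f 0 = 0"
  shows "Poly_Mapping.lookup (\<Sum>m\<in>Poly_Mapping.keys P. Poly_Mapping.single m (f (Poly_Mapping.lookup P m))) x
           = f (Poly_Mapping.lookup P x)"
  using assms by (simp add: lookup_sum_single sum.delta in_keys_iff)

lemma lookup_smul [simp]: "Poly_Mapping.lookup (smul c P) x = c *\<^sub>R Poly_Mapping.lookup P x"
  unfolding smul_def by (simp add: lookup_sum_keys_single[of "\<lambda>v. c *\<^sub>R v"])

lemma lookup_rmul [simp]: "Poly_Mapping.lookup (rmul P M) x = Poly_Mapping.lookup P x ** M"
  unfolding rmul_def by (simp add: lookup_sum_keys_single[of "\<lambda>v. v ** M"])

lemma lookup_lmul [simp]: "Poly_Mapping.lookup (lmul M P) x = M ** Poly_Mapping.lookup P x"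
  unfolding lmul_def by (simp add: lookup_sum_keys_single[of "\<lambda>v. M ** v"])

lemma lookup_xmul:
  "Poly_Mapping.lookup (xmul j P) x =
     (if Poly_Mapping.lookup x j = 0 then 0 else Poly_Mapping.lookup P (x - Poly_Mapping.single j 1))"
  unfolding xmul_def lookup_sum_single single_add_eq_iff
  by (simp add: sum.delta in_keys_iff)

lemma lookup_pdiff:
  "Poly_Mapping.lookup (pdiff i P) x =
     real (Poly_Mapping.lookup x i + 1) *\<^sub>R Poly_Mapping.lookup P (x + Poly_Mapping.single i 1)"
proof -
  have "Poly_Mapping.lookup (pdiff i P) x =
        (\<Sum>m\<in>Poly_Mapping.keys P. if m = x + Poly_Mapping.single i 1
           then real (Poly_Mapping.lookup m i) *\<^sub>R Poly_Mapping.lookup P m else 0)"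
    unfolding pdiff_def lookup_sum_single
  proof (intro sum.cong refl)
    fix m
    show "(if m - Poly_Mapping.single i 1 = x
             then real (Poly_Mapping.lookup m i) *\<^sub>R Poly_Mapping.lookup P m else 0) =
          (if m = x + Poly_Mapping.single i 1
             then real (Poly_Mapping.lookup m i) *\<^sub>R Poly_Mapping.lookup P m else 0)"
      using single_diff_eq_iff[of m i x] by (cases "Poly_Mapping.lookup m i = 0") auto
  qed
  then show ?thesis
    by (simp add: sum.delta in_keys_iff lookup_add)
qed

lemma lookup_one_poly: "Poly_Mapping.lookup one_poly x = (if x = 0 then mat 1 else 0)"
  by (simp add: one_poly_def lookup_single when_def)

lemma matrix_add_rdistrib: "(A + B) ** (C :: 'a::semiring_1^'n^'m) = A ** C + B ** C"
  by (simp add: matrix_matrix_mult_def vec_eq_iff sum.distrib algebra_simps)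

lemma additive_smul: "Modules.additive (smul c)"
  by unfold_locales (rule poly_mapping_eqI, simp add: lookup_add scaleR_add_right)

lemma additive_pdiff: "Modules.additive (pdiff i)"
  by unfold_locales (rule poly_mapping_eqI, simp add: lookup_pdiff lookup_add scaleR_add_right)

lemma additive_xmul: "Modules.additive (xmul i)"
  by unfold_locales (rule poly_mapping_eqI, simp add: lookup_xmul lookup_add)

lemma additive_rmul: "Modules.additive (\<lambda>P. rmul P M)"
  by unfold_locales (rule poly_mapping_eqI, simp add: lookup_add matrix_add_rdistrib)

lemma additive_lmul: "Modules.additive (lmul M)"
  by unfold_locales (rule poly_mapping_eqI, simp add: lookup_add matrix_add_ldistrib)

lemmas smul_add = Modules.additive.add[OF additive_smul]
lemmas smul_zero = Modules.additive.zero[OF additive_smul]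
lemmas smul_sum = Modules.additive.sum[OF additive_smul]
lemmas pdiff_add = Modules.additive.add[OF additive_pdiff]
lemmas pdiff_sum = Modules.additive.sum[OF additive_pdiff]
lemmas xmul_add = Modules.additive.add[OF additive_xmul]
lemmas xmul_zero = Modules.additive.zero[OF additive_xmul]
lemmas rmul_add = Modules.additive.add[OF additive_rmul]
lemmas lmul_add = Modules.additive.add[OF additive_lmul]
lemmas lmul_sum = Modules.additive.sum[OF additive_lmul]

lemma smul_sum_left: "smul (\<Sum>x\<in>S. f x) P = (\<Sum>x\<in>S. smul (f x) P)"
  by (rule poly_mapping_eqI) (simp add: lookup_sum scaleR_sum_left)

lemma smul_smul: "smul a (smul b P) = smul (a * b) P"
  by (rule poly_mapping_eqI) simp

lemma smul_one: "smul 1 P = P"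
  by (rule poly_mapping_eqI) simp

lemma smul_0_left: "smul 0 P = 0"
  by (rule poly_mapping_eqI) simp

lemma sum_smul_poly:
  assumes "\<And>j. j \<in> S \<Longrightarrow> degree (p j) < d"
  shows "(\<Sum>j\<in>S. smul (poly (p j) x) (G j)) = (\<Sum>m<d. smul (x ^ m) (\<Sum>j\<in>S. smul (coeff (p j) m) (G j)))"
proof -
  have "poly (p j) x = (\<Sum>m<d. coeff (p j) m * x ^ m)" if "j \<in> S" for j
    unfolding poly_altdef using assms[OF that]
    by (intro sum.mono_neutral_left) (auto simp: coeff_eq_0)
  then have "(\<Sum>j\<in>S. smul (poly (p j) x) (G j)) = (\<Sum>j\<in>S. \<Sum>m<d. smul (x ^ m) (smul (coeff (p j) m) (G j)))"
    by (intro sum.cong refl) (simp only: smul_sum_left smul_smul mult.commute)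
  also have "\<dots> = (\<Sum>m<d. smul (x ^ m) (\<Sum>j\<in>S. smul (coeff (p j) m) (G j)))"
    by (subst sum.swap) (simp only: smul_sum)
  finally show ?thesis .
qed

lemma pdiff_smul: "pdiff i (smul c P) = smul c (pdiff i P)"
  by (rule poly_mapping_eqI) (simp add: lookup_pdiff)

lemma xmul_smul: "xmul i (smul c P) = smul c (xmul i P)"
  by (rule poly_mapping_eqI) (simp add: lookup_xmul)

lemma rmul_smul: "rmul (smul c P) M = smul c (rmul P M)"
  by (rule poly_mapping_eqI) (simp add: scalar_matrix_assoc)

lemma lmul_rmul: "lmul M (rmul P N) = rmul (lmul M P) N"
  by (rule poly_mapping_eqI) (simp add: matrix_mul_assoc)

lemma lmul_xmul: "lmul M (xmul i P) = xmul i (lmul M P)"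
  by (rule poly_mapping_eqI) (simp add: lookup_xmul)

lemma lmul_pdiff: "lmul M (pdiff i P) = pdiff i (lmul M P)"
  by (rule poly_mapping_eqI) (simp add: lookup_pdiff matrix_scalar_ac scalar_matrix_assoc)

lemma rmul_pdiff: "rmul (pdiff i P) M = pdiff i (rmul P M)"
  by (rule poly_mapping_eqI) (simp add: lookup_pdiff scalar_matrix_assoc)

lemma rmul_one_poly: "rmul one_poly M = lmul M one_poly"
  by (rule poly_mapping_eqI) (simp add: lookup_one_poly)

lemma pdiff_pdiff: "pdiff j (pdiff i P) = pdiff i (pdiff j P)"
proof (rule poly_mapping_eqI)
  fix x
  have "x + Poly_Mapping.single j 1 + Poly_Mapping.single i 1 =
        x + Poly_Mapping.single i 1 + Poly_Mapping.single j (1::nat)"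
    by (simp add: add_ac)
  then show "Poly_Mapping.lookup (pdiff j (pdiff i P)) x = Poly_Mapping.lookup (pdiff i (pdiff j P)) x"
    by (cases "i = j") (auto simp: lookup_pdiff lookup_add lookup_single)
qed

lemma pdiff_xmul: "pdiff j (xmul l P) = xmul l (pdiff j P) + (if j = l then P else 0)"
proof (rule poly_mapping_eqI)
  fix x
  show "Poly_Mapping.lookup (pdiff j (xmul l P)) x =
        Poly_Mapping.lookup (xmul l (pdiff j P) + (if j = l then P else 0)) x"
    using diff_single_add_single[of x l j]
    by (cases "j = l") (auto simp: lookup_pdiff lookup_xmul lookup_add lookup_minus lookup_single algebra_simps)
qed

section \<open>Bounding the variables\<close>

lemma in_vars_iff:
  "in_vars l P \<longleftrightarrow>
     (\<forall>m j. Poly_Mapping.lookup P m \<noteq> 0 \<longrightarrow> Poly_Mapping.lookup m j \<noteq> 0 \<longrightarrow> j < l)"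
  unfolding in_vars_def by (auto simp: in_keys_iff)

lemma in_vars_mono: "in_vars l P \<Longrightarrow> l \<le> l' \<Longrightarrow> in_vars l' P"
  unfolding in_vars_iff by (meson order_less_le_trans)

lemma in_vars_nvars: "in_vars l P \<Longrightarrow> in_vars (nvars P) P \<and> nvars P \<le> l"
  unfolding nvars_def by (metis LeastI Least_le)

lemma in_vars_zero: "in_vars l 0"
  by (simp add: in_vars_iff)

lemma in_vars_one_poly: "in_vars 0 one_poly"
  by (simp add: in_vars_iff lookup_one_poly)

lemma in_vars_add: "in_vars l P \<Longrightarrow> in_vars l Q \<Longrightarrow> in_vars l (P + Q)"
  unfolding in_vars_iff lookup_add by (metis add.right_neutral)

lemma in_vars_sum: "(\<And>x. x \<in> S \<Longrightarrow> in_vars l (f x)) \<Longrightarrow> in_vars l (\<Sum>x\<in>S. f x)"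
  by (induction S rule: infinite_finite_induct) (auto intro: in_vars_add in_vars_zero)

lemma in_vars_smul: "in_vars l P \<Longrightarrow> in_vars l (smul c P)"
  unfolding in_vars_iff lookup_smul by (metis scaleR_zero_right)

lemma in_vars_rmul: "in_vars l P \<Longrightarrow> in_vars l (rmul P M)"
  unfolding in_vars_iff lookup_rmul by (metis times0_left)

lemma in_vars_lmul: "in_vars l P \<Longrightarrow> in_vars l (lmul M P)"
  unfolding in_vars_iff lookup_lmul by (metis times0_right)

lemma in_vars_pdiff: "in_vars l P \<Longrightarrow> in_vars l (pdiff i P)"
  unfolding in_vars_iff lookup_pdiff by (fastforce simp: lookup_add)

lemma in_vars_xmul:
  assumes "in_vars l P" "j < l"
  shows "in_vars l (xmul j P)"
  unfolding in_vars_iff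
proof (intro allI impI)
  fix m i
  assume "Poly_Mapping.lookup (xmul j P) m \<noteq> 0" "Poly_Mapping.lookup m i \<noteq> 0"
  then show "i < l"
    using assms unfolding in_vars_iff
    by (cases "i = j") (auto simp: lookup_xmul lookup_minus lookup_single split: if_splits)
qed

lemma pdiff_eq_0: "in_vars l P \<Longrightarrow> l \<le> i \<Longrightarrow> pdiff i P = 0"
  unfolding in_vars_iff
  by (intro poly_mapping_eqI) (fastforce simp: lookup_pdiff lookup_add)

section \<open>The operator \<open>\<Psi>\<close>\<close>

text \<open>\<^const>\<open>Psi\<close> sums only up to \<^term>\<open>nvars P\<close>, so it is not additive. Summing up to
  any fixed bound \<open>N\<close> with \<^term>\<open>in_vars N P\<close> gives the same value and a linear operator.\<close>

definition Psi_upto :: "real^'n^'n \<Rightarrow> real^'n^'n \<Rightarrow> nat \<Rightarrow> 'n::finite epoly \<Rightarrow> 'n epoly" where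
  "Psi_upto A B N P = rmul P A + xmul 0 (rmul P B) + (\<Sum>i<N. xmul (Suc i) (pdiff i P))"

lemma Psi_eq_Psi_upto:
  assumes "in_vars N P"
  shows "Psi A B P = Psi_upto A B N P"
proof -
  have "in_vars (nvars P) P" "nvars P \<le> N"
    using in_vars_nvars[OF assms] by auto
  then have "(\<Sum>i<nvars P. xmul (Suc i) (pdiff i P)) = (\<Sum>i<N. xmul (Suc i) (pdiff i P))"
    by (intro sum.mono_neutral_left) (auto simp: pdiff_eq_0 xmul_zero)
  then show ?thesis
    unfolding Psi_def Psi_upto_def by simp
qed

lemma in_vars_Psi_upto: "in_vars N P \<Longrightarrow> in_vars (Suc N) (Psi_upto A B N P)"
  unfolding Psi_upto_def
  by (intro in_vars_add in_vars_sum in_vars_xmul in_vars_rmul in_vars_pdiff) (auto intro: in_vars_mono)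

lemma additive_Psi_upto: "Modules.additive (Psi_upto A B N)"
  by unfold_locales (simp add: Psi_upto_def rmul_add xmul_add pdiff_add sum.distrib add_ac)

lemmas Psi_upto_zero = Modules.additive.zero[OF additive_Psi_upto]
lemmas Psi_upto_sum = Modules.additive.sum[OF additive_Psi_upto]

lemma Psi_upto_smul: "Psi_upto A B N (smul c P) = smul c (Psi_upto A B N P)"
  by (simp add: Psi_upto_def rmul_smul xmul_smul pdiff_smul smul_add smul_sum)

lemma lmul_Psi_upto: "lmul M (Psi_upto A B N P) = Psi_upto A B N (lmul M P)"
  by (simp add: Psi_upto_def lmul_add lmul_sum lmul_rmul lmul_xmul lmul_pdiff)

lemma pdiff_0_Psi_upto:
  "pdiff 0 (Psi_upto A B N P) = Psi_upto A B N (pdiff 0 P) + rmul P B"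
  by (simp add: Psi_upto_def pdiff_add pdiff_sum pdiff_xmul rmul_pdiff pdiff_pdiff[of 0] add_ac)

lemma pdiff_Suc_Psi_upto:
  assumes "in_vars N P"
  shows "pdiff (Suc j) (Psi_upto A B N P) = Psi_upto A B N (pdiff (Suc j) P) + pdiff j P"
proof -
  have "(\<Sum>i<N. if j = i then pdiff i P else 0) = pdiff j P"
    using pdiff_eq_0[OF assms, of j] by auto
  then show ?thesis
    by (simp add: Psi_upto_def pdiff_add pdiff_sum pdiff_xmul rmul_pdiff pdiff_pdiff[of "Suc j"]
        sum.distrib add_ac)
qed

lemma Pk_0: "Pk A B 0 = one_poly"
  by (simp add: Pk_def)

lemma Pk_Suc: "Pk A B (Suc k) = Psi A B (Pk A B k)"
  by (simp add: Pk_def)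

lemma in_vars_Pk: "in_vars k (Pk A B k)"
  by (induction k) (simp_all add: Pk_0 in_vars_one_poly Pk_Suc Psi_eq_Psi_upto in_vars_Psi_upto)

lemma Pk_Suc_Psi_upto: "Pk A B (Suc k) = Psi_upto A B k (Pk A B k)"
  by (simp add: Pk_Suc Psi_eq_Psi_upto[OF in_vars_Pk])

lemma Psi_upto_lmul_Pk:
  assumes "k \<le> N"
  shows "Psi_upto A B N (lmul M (Pk A B k)) = lmul M (Pk A B (Suc k))"
  by (simp add: lmul_Psi_upto[symmetric] Pk_Suc Psi_eq_Psi_upto[OF in_vars_mono[OF in_vars_Pk assms]])

lemma Psi_sum_smul:
  assumes "\<And>j. j \<in> S \<Longrightarrow> in_vars N (R j)"
  shows "Psi A B (\<Sum>j\<in>S. smul (c j) (R j)) = (\<Sum>j\<in>S. smul (c j) (Psi_upto A B N (R j)))"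
proof -
  have "in_vars N (\<Sum>j\<in>S. smul (c j) (R j))"
    using assms by (intro in_vars_sum in_vars_smul)
  then show ?thesis
    by (simp add: Psi_eq_Psi_upto Psi_upto_sum Psi_upto_smul)
qed

section \<open>The polynomials \<open>Q\<^sub>i\<^sup>k\<close>\<close>

lemma Qik_eq_0: "Qik A B 0 k = 0"
  unfolding Qik_def by (rule pdiff_eq_0[OF in_vars_Pk]) simp

lemma in_vars_Qik: "in_vars k (Qik A B i k)"
  unfolding Qik_def by (rule in_vars_pdiff[OF in_vars_Pk])

lemma Qik_Suc_Suc:
  "Qik A B (Suc i) (Suc i + Suc k) = Qik A B (Suc i) (Suc i + k) + Psi A B (Qik A B i (i + Suc k))"
proof -
  let ?P = "Pk A B (Suc i + k)"
  have "Qik A B (Suc i) (Suc i + Suc k) = pdiff (Suc k) (Psi_upto A B (Suc i + k) ?P)"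
    by (simp add: Qik_def Pk_Suc_Psi_upto)
  also have "\<dots> = Psi_upto A B (Suc i + k) (pdiff (Suc k) ?P) + pdiff k ?P"
    by (rule pdiff_Suc_Psi_upto[OF in_vars_Pk])
  also have "\<dots> = Psi_upto A B (i + Suc k) (Qik A B i (i + Suc k)) + Qik A B (Suc i) (Suc i + k)"
    by (simp add: Qik_def)
  also have "\<dots> = Psi A B (Qik A B i (i + Suc k)) + Qik A B (Suc i) (Suc i + k)"
    by (simp only: Psi_eq_Psi_upto[OF in_vars_Qik])
  finally show ?thesis
    by (simp add: add.commute)
qed

lemma Qik_Suc_eq_sum:
  "Qik A B (Suc i) (Suc i + k) = Qik A B (Suc i) (Suc i) + (\<Sum>t<k. Psi A B (Qik A B i (i + Suc t)))"
proof (induction k)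
  case (Suc k)
  then show ?case
    by (simp only: Qik_Suc_Suc sum.lessThan_Suc add_ac)
qed simp

lemma Qik_1: "Qik A B 1 (1 + k) = lmul B one_poly"
proof -
  have "Psi A B (Qik A B 0 t) = 0" for t
    by (simp add: Qik_eq_0 Psi_eq_Psi_upto[OF in_vars_zero[of 0]] Psi_upto_zero)
  then have "Qik A B 1 (1 + k) = Qik A B 1 1"
    using Qik_Suc_eq_sum[of A B 0 k] by simp
  also have "\<dots> = pdiff 0 (Psi_upto A B 0 one_poly)"
    by (simp add: Qik_def Pk_Suc_Psi_upto Pk_0)
  also have "\<dots> = lmul B one_poly"
    by (simp add: pdiff_0_Psi_upto pdiff_eq_0[OF in_vars_one_poly] Psi_upto_zero rmul_one_poly)
  finally show ?thesis .
qed

lemma sum_Suc_power_combination: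
  fixes C :: "'n::finite epoly" and G :: "nat \<Rightarrow> 'n epoly"
  assumes C: "in_vars N C" and G: "\<And>j. j < Suc i \<Longrightarrow> in_vars N (G j)"
  obtains H where "\<And>m. in_vars N (H m)"
    and "\<And>k. C + (\<Sum>t<k. \<Sum>j<Suc i. smul (real (Suc t) ^ j) (G j)) =
               (\<Sum>m<Suc (Suc i). smul (real k ^ m) (H m))"
    and "H (Suc i) = smul (1 / real (Suc i)) (G i)"
proof -
  obtain p where deg: "\<And>j. degree (p j) = Suc j"
    and lead: "\<And>j. lead_coeff (p j) = 1 / real (Suc j)"
    and val: "\<And>j k. poly (p j) (real k) = (\<Sum>t<k. real (Suc t) ^ j)"
    using sum_Suc_powers_poly by metis
  define H where "H m = (if m = 0 then C else 0) + (\<Sum>j<Suc i. smul (coeff (p j) m) (G j))" for m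
  have "in_vars N (H m)" for m
    unfolding H_def using C G by (auto intro!: in_vars_add in_vars_sum in_vars_smul in_vars_zero)
  moreover have "C + (\<Sum>t<k. \<Sum>j<Suc i. smul (real (Suc t) ^ j) (G j)) =
                 (\<Sum>m<Suc (Suc i). smul (real k ^ m) (H m))" for k
  proof -
    have "(\<Sum>t<k. \<Sum>j<Suc i. smul (real (Suc t) ^ j) (G j)) = (\<Sum>j<Suc i. smul (poly (p j) (real k)) (G j))"
      by (simp add: val smul_sum_left sum.swap[of _ "{..<k}"])
    also have "\<dots> = (\<Sum>m<Suc (Suc i). smul (real k ^ m) (\<Sum>j<Suc i. smul (coeff (p j) m) (G j)))"
      by (rule sum_smul_poly) (simp add: deg)
    moreover have "(\<Sum>m<Suc (Suc i). smul (real k ^ m) (if m = 0 then C else 0)) = C"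
      by (simp add: smul_zero smul_one if_distrib cong: if_cong)
    ultimately show ?thesis
      by (simp add: H_def smul_add sum.distrib)
  qed
  moreover have "H (Suc i) = smul (1 / real (Suc i)) (G i)"
  proof -
    have "coeff (p j) (Suc i) = 0" if "j < i" for j
      using that by (simp add: coeff_eq_0 deg)
    moreover have "coeff (p i) (Suc i) = 1 / real (Suc i)"
      using lead[of i] by (simp add: deg)
    ultimately show ?thesis
      by (simp add: H_def smul_0_left)
  qed
  ultimately show ?thesis
    using that by blast
qed

lemma Qik_Suc_polynomial:
  "\<exists>R. (\<forall>j<Suc i. in_vars (Suc i) (R j)) \<and>
       (\<forall>k. Qik A B (Suc i) (Suc i + k) = (\<Sum>j<Suc i. smul (real k ^ j) (R j))) \<and>
       R i = smul (1 / fact i) (lmul B (Pk A B i))"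
proof (induction i)
  case 0
  have "in_vars 1 (lmul B one_poly)"
    by (intro in_vars_lmul in_vars_mono[OF in_vars_one_poly]) simp
  then show ?case
    using Qik_1[of A B] by (intro exI[of _ "\<lambda>_. lmul B one_poly"]) (simp add: smul_one Pk_0)
next
  case (Suc i)
  then obtain R where R_vars: "\<forall>j<Suc i. in_vars (Suc i) (R j)"
    and R_Qik: "\<forall>k. Qik A B (Suc i) (Suc i + k) = (\<Sum>j<Suc i. smul (real k ^ j) (R j))"
    and R_lead: "R i = smul (1 / fact i) (lmul B (Pk A B i))"
    by blast
  define G where "G j = Psi_upto A B (Suc i) (R j)" for j
  have G_vars: "\<And>j. j < Suc i \<Longrightarrow> in_vars (Suc (Suc i)) (G j)"
    using R_vars by (simp add: G_def in_vars_Psi_upto)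
  obtain H where H_vars: "\<And>m. in_vars (Suc (Suc i)) (H m)"
    and H_Qik: "\<And>k. Qik A B (Suc (Suc i)) (Suc (Suc i)) + (\<Sum>t<k. \<Sum>j<Suc i. smul (real (Suc t) ^ j) (G j)) =
                    (\<Sum>m<Suc (Suc i). smul (real k ^ m) (H m))"
    and H_lead: "H (Suc i) = smul (1 / real (Suc i)) (G i)"
    using sum_Suc_power_combination[where G = G and i = i, OF in_vars_Qik G_vars] by blast
  have "Psi A B (Qik A B (Suc i) (Suc i + Suc t)) = (\<Sum>j<Suc i. smul (real (Suc t) ^ j) (G j))" for t
    unfolding R_Qik[rule_format] G_def using R_vars by (intro Psi_sum_smul) simp
  then have "Qik A B (Suc (Suc i)) (Suc (Suc i) + k) = (\<Sum>m<Suc (Suc i). smul (real k ^ m) (H m))" for k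
    using Qik_Suc_eq_sum[of A B "Suc i" k] by (simp only: H_Qik)
  moreover have "H (Suc i) = smul (1 / fact (Suc i)) (lmul B (Pk A B (Suc i)))"
    by (simp add: H_lead G_def R_lead Psi_upto_smul Psi_upto_lmul_Pk smul_smul)
  ultimately show ?case
    using H_vars by blast
qed

theorem lemma1:
  fixes A B :: "real^'n^'n" and i :: nat
  assumes "i \<ge> 1"
  shows "\<exists>R :: nat \<Rightarrow> 'n epoly.
           (\<forall>j<i. in_vars i (R j)) \<and>
           (\<forall>k::nat. Qik A B i (i + k) = (\<Sum>j<i. smul (real k ^ j) (R j))) \<and>
           R (i - 1) = smul (1 / fact (i - 1)) (lmul B (Pk A B (i - 1)))"
proof -
  obtain i' where "i = Suc i'"
    using assms by (cases i) auto
  then show ?thesis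
    using Qik_Suc_polynomial[of i' A B] by simp
qed

end
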